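(* Let $B$ be an integral $n\times n$ matrix with $B_{ij}\ge0$ and $B_{ii}>0$ for all $1\le i,j\le n$, and let $k$ be a field. Then there exist a finite dimensional triangular $k$-algebra $A$ (with respect to primitive orthogonal idempotents $e_1,\dots,e_n$) and a triangular $A$-$A$-bimodule $M$ such that $C_A=B_+$ and $C_M=B_-$. In particular $B=C_\Lambda$ for $\Lambda=A\ltimes DM$.
   Context: $A$ is triangular if $e_iAe_j=0$ for $j<i$ and $e_iAe_i\cong k$; a bimodule $M$ is triangular if $e_iMe_j=0$ for $j<i$. $DM=\operatorname{Hom}_k(M,k)$ and $\Lambda=A\ltimes DM$ is $A\oplus DM$ with $(a,\mu)(a',\mu')=(aa',a\mu'+\mu a')$, with idempotents $(e_i,0)$. Cartan matrices: $(C_A)_{ij}=\dim_ke_{n+1-j}Ae_{n+1-i}$, $(C_M)_{ij}=\dim_ke_{n+1-j}Me_{n+1-i}$, $(C_\Lambda)_{ij}=\dim_ke_{n+1-j}\Lambda e_{n+1-i}$. For a square matrix $B$: $(B_+)_{ij}=B_{ij}$ if $i<j$, $1$ if $i=j$, $0$ otherwise; $(B_-)_{ij}=B_{ji}$ if $i<j$, $B_{ii}-1$ if $i=j$, $0$ otherwise (so $B=B_++B_-^T$). *)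

theory Defs
  imports Main HOL.Vector_Spaces "HOL-Library.Function_Algebras" "HOL-Library.Product_Plus"
begin

text \<open>Finite dimensional k-vector spaces are modelled concretely as k^d, i.e. functions
  nat => k vanishing from d on, with pointwise addition and the scalar action fsc.
  Every finite dimensional k-algebra (resp. bimodule) is isomorphic to one of this shape,
  so existential quantification over these concrete models is faithful.\<close>

definition fsc :: "'k::field \<Rightarrow> (nat \<Rightarrow> 'k) \<Rightarrow> (nat \<Rightarrow> 'k)" where
  "fsc c v = (\<lambda>i. c * v i)"

definition kspace :: "nat \<Rightarrow> (nat \<Rightarrow> 'k::zero) set" where
  "kspace d = {v. \<forall>i\<ge>d. v i = 0}"

definition kdim :: "(nat \<Rightarrow> 'k::field) set \<Rightarrow> nat" where
  "kdim S = vector_space.dim fsc S"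

definition fd_algebra :: "nat \<Rightarrow> ((nat \<Rightarrow> 'k::field) \<Rightarrow> (nat \<Rightarrow> 'k) \<Rightarrow> (nat \<Rightarrow> 'k))
    \<Rightarrow> (nat \<Rightarrow> 'k) \<Rightarrow> bool" where
  "fd_algebra d mul one \<longleftrightarrow>
     one \<in> kspace d \<and>
     (\<forall>x\<in>kspace d. \<forall>y\<in>kspace d. mul x y \<in> kspace d) \<and>
     (\<forall>x\<in>kspace d. \<forall>y\<in>kspace d. \<forall>z\<in>kspace d.
        mul (x + y) z = mul x z + mul y z \<and> mul x (y + z) = mul x y + mul x z \<and>
        mul (mul x y) z = mul x (mul y z)) \<and>
     (\<forall>c. \<forall>x\<in>kspace d. \<forall>y\<in>kspace d.
        mul (fsc c x) y = fsc c (mul x y) \<and> mul x (fsc c y) = fsc c (mul x y)) \<and>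
     (\<forall>x\<in>kspace d. mul one x = x \<and> mul x one = x)"

definition fd_bimodule :: "nat \<Rightarrow> ((nat \<Rightarrow> 'k::field) \<Rightarrow> (nat \<Rightarrow> 'k) \<Rightarrow> (nat \<Rightarrow> 'k))
    \<Rightarrow> (nat \<Rightarrow> 'k) \<Rightarrow> nat
    \<Rightarrow> ((nat \<Rightarrow> 'k) \<Rightarrow> (nat \<Rightarrow> 'k) \<Rightarrow> (nat \<Rightarrow> 'k))
    \<Rightarrow> ((nat \<Rightarrow> 'k) \<Rightarrow> (nat \<Rightarrow> 'k) \<Rightarrow> (nat \<Rightarrow> 'k)) \<Rightarrow> bool" where
  "fd_bimodule d mul one m lact ract \<longleftrightarrow>
     (\<forall>a\<in>kspace d. \<forall>x\<in>kspace m. lact a x \<in> kspace m \<and> ract x a \<in> kspace m) \<and>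
     (\<forall>a\<in>kspace d. \<forall>b\<in>kspace d. \<forall>x\<in>kspace m. \<forall>y\<in>kspace m.
        lact (a + b) x = lact a x + lact b x \<and> lact a (x + y) = lact a x + lact a y \<and>
        ract (x + y) a = ract x a + ract y a \<and> ract x (a + b) = ract x a + ract x b \<and>
        lact (mul a b) x = lact a (lact b x) \<and> ract x (mul a b) = ract (ract x a) b \<and>
        lact a (ract x b) = ract (lact a x) b) \<and>
     (\<forall>c. \<forall>a\<in>kspace d. \<forall>x\<in>kspace m.
        lact (fsc c a) x = fsc c (lact a x) \<and> lact a (fsc c x) = fsc c (lact a x) \<and>
        ract (fsc c x) a = fsc c (ract x a) \<and> ract x (fsc c a) = fsc c (ract x a)) \<and>
     (\<forall>x\<in>kspace m. lact one x = x \<and> ract x one = x)"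

definition corner :: "nat \<Rightarrow> ((nat \<Rightarrow> 'k::field) \<Rightarrow> (nat \<Rightarrow> 'k) \<Rightarrow> (nat \<Rightarrow> 'k))
    \<Rightarrow> (nat \<Rightarrow> nat \<Rightarrow> 'k) \<Rightarrow> nat \<Rightarrow> nat \<Rightarrow> (nat \<Rightarrow> 'k) set" where
  "corner d mul e i j = {mul (mul (e i) a) (e j) | a. a \<in> kspace d}"

definition mcorner :: "nat \<Rightarrow> ((nat \<Rightarrow> 'k::field) \<Rightarrow> (nat \<Rightarrow> 'k) \<Rightarrow> (nat \<Rightarrow> 'k))
    \<Rightarrow> ((nat \<Rightarrow> 'k) \<Rightarrow> (nat \<Rightarrow> 'k) \<Rightarrow> (nat \<Rightarrow> 'k))
    \<Rightarrow> (nat \<Rightarrow> nat \<Rightarrow> 'k) \<Rightarrow> nat \<Rightarrow> nat \<Rightarrow> (nat \<Rightarrow> 'k) set" where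
  "mcorner m lact ract e i j = {lact (e i) (ract x (e j)) | x. x \<in> kspace m}"

definition idem :: "nat \<Rightarrow> ((nat \<Rightarrow> 'k::field) \<Rightarrow> (nat \<Rightarrow> 'k) \<Rightarrow> (nat \<Rightarrow> 'k))
    \<Rightarrow> (nat \<Rightarrow> 'k) \<Rightarrow> bool" where
  "idem d mul x \<longleftrightarrow> x \<in> kspace d \<and> mul x x = x"

definition primitive_idem :: "nat \<Rightarrow> ((nat \<Rightarrow> 'k::field) \<Rightarrow> (nat \<Rightarrow> 'k) \<Rightarrow> (nat \<Rightarrow> 'k))
    \<Rightarrow> (nat \<Rightarrow> 'k) \<Rightarrow> bool" where
  "primitive_idem d mul x \<longleftrightarrow> idem d mul x \<and> x \<noteq> 0 \<and>
     \<not> (\<exists>f g. idem d mul f \<and> idem d mul g \<and> f \<noteq> 0 \<and> g \<noteq> 0 \<and>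
            mul f g = 0 \<and> mul g f = 0 \<and> x = f + g)"

definition complete_prim_orth :: "nat \<Rightarrow> ((nat \<Rightarrow> 'k::field) \<Rightarrow> (nat \<Rightarrow> 'k) \<Rightarrow> (nat \<Rightarrow> 'k))
    \<Rightarrow> (nat \<Rightarrow> 'k) \<Rightarrow> nat \<Rightarrow> (nat \<Rightarrow> nat \<Rightarrow> 'k) \<Rightarrow> bool" where
  "complete_prim_orth d mul one n e \<longleftrightarrow>
     (\<forall>i\<in>{1..n}. primitive_idem d mul (e i)) \<and>
     (\<forall>i\<in>{1..n}. \<forall>j\<in>{1..n}. i \<noteq> j \<longrightarrow> mul (e i) (e j) = 0) \<and>
     (\<Sum>i=1..n. e i) = one"

definition triangular_alg :: "nat \<Rightarrow> ((nat \<Rightarrow> 'k::field) \<Rightarrow> (nat \<Rightarrow> 'k) \<Rightarrow> (nat \<Rightarrow> 'k))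
    \<Rightarrow> nat \<Rightarrow> (nat \<Rightarrow> nat \<Rightarrow> 'k) \<Rightarrow> bool" where
  "triangular_alg d mul n e \<longleftrightarrow>
     (\<forall>i\<in>{1..n}. \<forall>j\<in>{1..n}. j < i \<longrightarrow> corner d mul e i j = {0}) \<and>
     (\<forall>i\<in>{1..n}. corner d mul e i i = {fsc c (e i) | c. True})"

definition triangular_bimod :: "nat \<Rightarrow> ((nat \<Rightarrow> 'k::field) \<Rightarrow> (nat \<Rightarrow> 'k) \<Rightarrow> (nat \<Rightarrow> 'k))
    \<Rightarrow> ((nat \<Rightarrow> 'k) \<Rightarrow> (nat \<Rightarrow> 'k) \<Rightarrow> (nat \<Rightarrow> 'k))
    \<Rightarrow> nat \<Rightarrow> (nat \<Rightarrow> nat \<Rightarrow> 'k) \<Rightarrow> bool" where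
  "triangular_bimod m lact ract n e \<longleftrightarrow>
     (\<forall>i\<in>{1..n}. \<forall>j\<in>{1..n}. j < i \<longrightarrow> mcorner m lact ract e i j = {0})"

definition cartanA :: "nat \<Rightarrow> ((nat \<Rightarrow> 'k::field) \<Rightarrow> (nat \<Rightarrow> 'k) \<Rightarrow> (nat \<Rightarrow> 'k))
    \<Rightarrow> nat \<Rightarrow> (nat \<Rightarrow> nat \<Rightarrow> 'k) \<Rightarrow> nat \<Rightarrow> nat \<Rightarrow> int" where
  "cartanA d mul n e i j = int (kdim (corner d mul e (n + 1 - j) (n + 1 - i)))"

definition cartanM :: "nat \<Rightarrow> ((nat \<Rightarrow> 'k::field) \<Rightarrow> (nat \<Rightarrow> 'k) \<Rightarrow> (nat \<Rightarrow> 'k))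
    \<Rightarrow> ((nat \<Rightarrow> 'k) \<Rightarrow> (nat \<Rightarrow> 'k) \<Rightarrow> (nat \<Rightarrow> 'k))
    \<Rightarrow> nat \<Rightarrow> (nat \<Rightarrow> nat \<Rightarrow> 'k) \<Rightarrow> nat \<Rightarrow> nat \<Rightarrow> int" where
  "cartanM m lact ract n e i j = int (kdim (mcorner m lact ract e (n + 1 - j) (n + 1 - i)))"

text \<open>The dual DM = Hom_k(M,k): k-linear functionals on k^m (extended by 0 off k^m).\<close>
definition dualsp :: "nat \<Rightarrow> ((nat \<Rightarrow> 'k::field) \<Rightarrow> 'k) set" where
  "dualsp m = {\<mu>. (\<forall>x\<in>kspace m. \<forall>y\<in>kspace m. \<mu> (x + y) = \<mu> x + \<mu> y) \<and>
                 (\<forall>c. \<forall>x\<in>kspace m. \<mu> (fsc c x) = c * \<mu> x) \<and>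
                 (\<forall>x. x \<notin> kspace m \<longrightarrow> \<mu> x = 0)}"

definition dleft :: "nat \<Rightarrow> ((nat \<Rightarrow> 'k) \<Rightarrow> (nat \<Rightarrow> 'k) \<Rightarrow> (nat \<Rightarrow> 'k))
    \<Rightarrow> (nat \<Rightarrow> 'k::field) \<Rightarrow> ((nat \<Rightarrow> 'k) \<Rightarrow> 'k) \<Rightarrow> ((nat \<Rightarrow> 'k) \<Rightarrow> 'k)" where
  "dleft m ract a \<mu> = (\<lambda>x. if x \<in> kspace m then \<mu> (ract x a) else 0)"

definition dright :: "nat \<Rightarrow> ((nat \<Rightarrow> 'k) \<Rightarrow> (nat \<Rightarrow> 'k) \<Rightarrow> (nat \<Rightarrow> 'k))
    \<Rightarrow> ((nat \<Rightarrow> 'k) \<Rightarrow> 'k) \<Rightarrow> (nat \<Rightarrow> 'k::field) \<Rightarrow> ((nat \<Rightarrow> 'k) \<Rightarrow> 'k)" where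
  "dright m lact \<mu> a = (\<lambda>x. if x \<in> kspace m then \<mu> (lact a x) else 0)"

definition triv_mul :: "((nat \<Rightarrow> 'k::field) \<Rightarrow> (nat \<Rightarrow> 'k) \<Rightarrow> (nat \<Rightarrow> 'k))
    \<Rightarrow> nat \<Rightarrow> ((nat \<Rightarrow> 'k) \<Rightarrow> (nat \<Rightarrow> 'k) \<Rightarrow> (nat \<Rightarrow> 'k))
    \<Rightarrow> ((nat \<Rightarrow> 'k) \<Rightarrow> (nat \<Rightarrow> 'k) \<Rightarrow> (nat \<Rightarrow> 'k))
    \<Rightarrow> (nat \<Rightarrow> 'k) \<times> ((nat \<Rightarrow> 'k) \<Rightarrow> 'k) \<Rightarrow> (nat \<Rightarrow> 'k) \<times> ((nat \<Rightarrow> 'k) \<Rightarrow> 'k)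
    \<Rightarrow> (nat \<Rightarrow> 'k) \<times> ((nat \<Rightarrow> 'k) \<Rightarrow> 'k)" where
  "triv_mul mul m lact ract p q =
     (mul (fst p) (fst q), dleft m ract (fst p) (snd q) + dright m lact (snd p) (fst q))"

definition tsc :: "'k::field \<Rightarrow> (nat \<Rightarrow> 'k) \<times> ((nat \<Rightarrow> 'k) \<Rightarrow> 'k)
    \<Rightarrow> (nat \<Rightarrow> 'k) \<times> ((nat \<Rightarrow> 'k) \<Rightarrow> 'k)" where
  "tsc c p = (fsc c (fst p), (\<lambda>x. c * snd p x))"

definition tdim :: "((nat \<Rightarrow> 'k::field) \<times> ((nat \<Rightarrow> 'k) \<Rightarrow> 'k)) set \<Rightarrow> nat" where
  "tdim S = vector_space.dim tsc S"

definition tcorner :: "nat \<Rightarrow> ((nat \<Rightarrow> 'k::field) \<Rightarrow> (nat \<Rightarrow> 'k) \<Rightarrow> (nat \<Rightarrow> 'k))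
    \<Rightarrow> nat \<Rightarrow> ((nat \<Rightarrow> 'k) \<Rightarrow> (nat \<Rightarrow> 'k) \<Rightarrow> (nat \<Rightarrow> 'k))
    \<Rightarrow> ((nat \<Rightarrow> 'k) \<Rightarrow> (nat \<Rightarrow> 'k) \<Rightarrow> (nat \<Rightarrow> 'k))
    \<Rightarrow> (nat \<Rightarrow> nat \<Rightarrow> 'k) \<Rightarrow> nat \<Rightarrow> nat \<Rightarrow> ((nat \<Rightarrow> 'k) \<times> ((nat \<Rightarrow> 'k) \<Rightarrow> 'k)) set" where
  "tcorner d mul m lact ract e i j =
     {triv_mul mul m lact ract (triv_mul mul m lact ract (e i, 0) z) (e j, 0) | z.
        z \<in> kspace d \<times> dualsp m}"

definition cartanL :: "nat \<Rightarrow> ((nat \<Rightarrow> 'k::field) \<Rightarrow> (nat \<Rightarrow> 'k) \<Rightarrow> (nat \<Rightarrow> 'k))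
    \<Rightarrow> nat \<Rightarrow> ((nat \<Rightarrow> 'k) \<Rightarrow> (nat \<Rightarrow> 'k) \<Rightarrow> (nat \<Rightarrow> 'k))
    \<Rightarrow> ((nat \<Rightarrow> 'k) \<Rightarrow> (nat \<Rightarrow> 'k) \<Rightarrow> (nat \<Rightarrow> 'k))
    \<Rightarrow> nat \<Rightarrow> (nat \<Rightarrow> nat \<Rightarrow> 'k) \<Rightarrow> nat \<Rightarrow> nat \<Rightarrow> int" where
  "cartanL d mul m lact ract n e i j =
     int (tdim (tcorner d mul m lact ract e (n + 1 - j) (n + 1 - i)))"

definition Bplus :: "(nat \<Rightarrow> nat \<Rightarrow> int) \<Rightarrow> nat \<Rightarrow> nat \<Rightarrow> int" where
  "Bplus B i j = (if i < j then B i j else if i = j then 1 else 0)"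

definition Bminus :: "(nat \<Rightarrow> nat \<Rightarrow> int) \<Rightarrow> nat \<Rightarrow> nat \<Rightarrow> int" where
  "Bminus B i j = (if i < j then B j i else if i = j then B i i - 1 else 0)"

end

theory Submission
  imports Defs "HOL-Library.Multiset"
begin

text \<open>Take \<open>A\<close> to be the radical-square-zero algebra of an acyclic quiver on the vertices
  \<open>1..n\<close>, and \<open>M\<close> a bimodule on which the arrows act trivially, i.e. a direct sum of
  one-dimensional bimodules concentrated in a single corner \<open>e\<^sub>p M e\<^sub>q\<close>. Taking as many
  arrows \<open>p \<rightarrow> q\<close> and as many summands in \<open>e\<^sub>p M e\<^sub>q\<close> as the corresponding entries of
  \<open>B\<^sub>+\<close> and \<open>B\<^sub>-\<close> prescribe (through the index reversal \<open>i \<mapsto> n + 1 - i\<close> built into the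
  Cartan matrices) makes every corner a coordinate subspace of the prescribed dimension.
  Acyclicity gives triangularity and \<open>e\<^sub>p A e\<^sub>p = k e\<^sub>p\<close>, which in turn makes each \<open>e\<^sub>p\<close>
  primitive. Finally \<open>e\<^sub>i \<Lambda> e\<^sub>j = e\<^sub>i A e\<^sub>j \<oplus> D(e\<^sub>j M e\<^sub>i)\<close>, so
  \<open>C\<^sub>\<Lambda> = B\<^sub>+ + B\<^sub>-\<^sup>T = B\<close>.\<close>

section \<open>Coordinate subspaces and their dimensions\<close>

definition unit_vec :: "nat \<Rightarrow> nat \<Rightarrow> 'a::zero_neq_one" where
  "unit_vec t = (\<lambda>s. if s = t then 1 else 0)"

definition coord_space :: "nat set \<Rightarrow> (nat \<Rightarrow> 'a::zero) set" where
  "coord_space T = {v. \<forall>t. t \<notin> T \<longrightarrow> v t = 0}"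

definition restrict0 :: "nat set \<Rightarrow> (nat \<Rightarrow> 'a::zero) \<Rightarrow> nat \<Rightarrow> 'a" where
  "restrict0 T v = (\<lambda>t. if t \<in> T then v t else 0)"

lemma restrict0_image_kspace:
  assumes "T \<subseteq> {..<d}"
  shows "restrict0 T ` kspace d = coord_space T"
proof (intro equalityI subsetI)
  fix v :: "nat \<Rightarrow> 'a" assume v: "v \<in> coord_space T"
  then have "v = restrict0 T v" and "v \<in> kspace d"
    using assms by (auto simp: restrict0_def coord_space_def kspace_def)
  then show "v \<in> restrict0 T ` kspace d" by blast
qed (auto simp: restrict0_def coord_space_def)

lemma coord_space_empty: "coord_space {} = {0}"
  by (auto simp: coord_space_def)

lemma coord_space_singleton: "coord_space {t} = {fsc c (unit_vec t) | c. True}"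
proof (intro equalityI subsetI)
  fix v :: "nat \<Rightarrow> 'a" assume "v \<in> coord_space {t}"
  then have "v = fsc (v t) (unit_vec t)"
    by (auto simp: fun_eq_iff fsc_def unit_vec_def coord_space_def)
  then show "v \<in> {fsc c (unit_vec t) | c. True}" by blast
qed (auto simp: coord_space_def fsc_def unit_vec_def)

lemma unit_vec_nonzero: "unit_vec t \<noteq> 0"
  by (metis unit_vec_def zero_fun_def zero_neq_one)

lemma unit_vec_apply: "unit_vec t s = (if s = t then 1 else 0)"
  by (simp add: unit_vec_def)

lemma unit_vec_in_kspace: "t < d \<Longrightarrow> unit_vec t \<in> kspace d"
  by (simp add: kspace_def unit_vec_def)

lemma sum_fun_apply: "(\<Sum>a\<in>A. f a) x = (\<Sum>a\<in>A. f a x)"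
  by (induction A rule: infinite_finite_induct) auto

lemma coord_space_expansion:
  assumes "finite T" "v \<in> coord_space T"
  shows "v = (\<Sum>t\<in>T. fsc (v t) (unit_vec t))"
  using assms by (auto simp: fun_eq_iff sum_fun_apply fsc_def unit_vec_def coord_space_def
      if_distrib cong: if_cong)

lemma vector_space_fsc: "vector_space (fsc :: 'k::field \<Rightarrow> _)"
  by unfold_locales (auto simp: fsc_def fun_eq_iff algebra_simps)

lemma vector_space_tsc: "vector_space (tsc :: 'k::field \<Rightarrow> _)"
  by unfold_locales (auto simp: tsc_def fsc_def fun_eq_iff algebra_simps)

lemma vector_space_field_mult: "vector_space ((*) :: 'k::field \<Rightarrow> 'k \<Rightarrow> 'k)"
  by unfold_locales (auto simp: algebra_simps)

interpretation fsc: vector_space "fsc :: 'k::field \<Rightarrow> (nat \<Rightarrow> 'k) \<Rightarrow> _"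
  by (rule vector_space_fsc)

interpretation tsc: vector_space "tsc :: 'k::field \<Rightarrow> (nat \<Rightarrow> 'k) \<times> ((nat \<Rightarrow> 'k) \<Rightarrow> 'k) \<Rightarrow> _"
  by (rule vector_space_tsc)

lemma (in vector_space) dim_eq_card_dual_basis:
  fixes b :: "'i \<Rightarrow> 'b" and \<phi> :: "'i \<Rightarrow> 'b \<Rightarrow> 'a"
  assumes I: "finite I"
    and linear: "\<And>j. j \<in> I \<Longrightarrow> Vector_Spaces.linear scale (*) (\<phi> j)"
    and dual: "\<And>i j. i \<in> I \<Longrightarrow> j \<in> I \<Longrightarrow> \<phi> j (b i) = (if i = j then 1 else 0)"
    and basis_in: "b ` I \<subseteq> V"
    and expansion: "\<And>v. v \<in> V \<Longrightarrow> v = (\<Sum>i\<in>I. scale (\<phi> i v) (b i))"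
  shows "dim V = card I"
proof (rule dim_unique[OF basis_in])
  have inj: "inj_on b I"
    by (rule inj_onI) (metis dual one_neq_zero)
  have hom: "module_hom scale (*) (\<phi> j)" if "j \<in> I" for j
    using linear[OF that] by (simp add: Vector_Spaces.linear_def)
  have coeff: "\<phi> j (\<Sum>i\<in>I. scale (c i) (b i)) = c j" if "j \<in> I" for c j
  proof -
    have "\<phi> j (\<Sum>i\<in>I. scale (c i) (b i)) = (\<Sum>i\<in>I. c i * \<phi> j (b i))"
      by (simp add: module_hom.sum[OF hom[OF that]] module_hom.scale[OF hom[OF that]])
    also have "\<dots> = c j"
      using I that by (simp add: dual if_distrib cong: if_cong)
    finally show ?thesis .
  qed
  show "V \<subseteq> span (b ` I)"
  proof
    fix v assume "v \<in> V"
    then have "v = (\<Sum>i\<in>I. scale (\<phi> i v) (b i))" by (rule expansion)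
    also have "\<dots> \<in> span (b ` I)" by (intro span_sum span_scale span_base) auto
    finally show "v \<in> span (b ` I)" .
  qed
  show "independent (b ` I)"
  proof (rule independent_if_scalars_zero)
    fix c x assume zero: "(\<Sum>x\<in>b ` I. scale (c x) x) = 0" and "x \<in> b ` I"
    then obtain j where j: "j \<in> I" "x = b j" by blast
    have "(\<Sum>i\<in>I. scale (c (b i)) (b i)) = 0"
      using zero by (simp add: sum.reindex[OF inj])
    then have "\<phi> j (\<Sum>i\<in>I. scale (c (b i)) (b i)) = 0"
      by (simp add: module_hom.zero[OF hom[OF j(1)]])
    then show "c x = 0" using coeff[OF j(1)] j by simp
  qed (use I in simp)
  show "card (b ` I) = card I" by (rule card_image[OF inj])
qed

lemma linear_coordinate: "Vector_Spaces.linear fsc (*) (\<lambda>v :: nat \<Rightarrow> 'k::field. v t)"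
  by (simp add: linear_iff vector_space_fsc vector_space_field_mult fsc_def)

lemma kdim_coord_space:
  assumes "finite T"
  shows "kdim (coord_space T :: (nat \<Rightarrow> 'k::field) set) = card T"
  unfolding kdim_def
proof (rule fsc.dim_eq_card_dual_basis[where b = unit_vec and \<phi> = "\<lambda>t v. v t"])
  show "v = (\<Sum>t\<in>T. fsc (v t) (unit_vec t))" if "v \<in> coord_space T" for v :: "nat \<Rightarrow> 'k"
    by (rule coord_space_expansion[OF assms that])
qed (use assms linear_coordinate in \<open>auto simp: unit_vec_def coord_space_def\<close>)

definition coord_functional :: "nat \<Rightarrow> nat \<Rightarrow> (nat \<Rightarrow> 'k::field) \<Rightarrow> 'k" where
  "coord_functional m u = (\<lambda>x. if x \<in> kspace m then x u else 0)"

text \<open>\<open>dual_restrict m U \<mu>\<close> is \<open>\<mu>\<close> composed with the projection of \<open>k\<^sup>m\<close> onto the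
  coordinates in \<open>U\<close>; for \<open>U\<close> the support of \<open>e\<^sub>j M e\<^sub>i\<close> these functionals form the
  \<open>DM\<close>-part \<open>D(e\<^sub>j M e\<^sub>i)\<close> of \<open>e\<^sub>i \<Lambda> e\<^sub>j\<close>.\<close>

definition dual_restrict :: "nat \<Rightarrow> nat set \<Rightarrow> ((nat \<Rightarrow> 'k::field) \<Rightarrow> 'k) \<Rightarrow> (nat \<Rightarrow> 'k) \<Rightarrow> 'k" where
  "dual_restrict m U \<mu> = (\<lambda>x. if x \<in> kspace m then \<mu> (restrict0 U x) else 0)"

lemma coord_functional_in_dualsp: "coord_functional m u \<in> dualsp m"
  by (auto simp: coord_functional_def dualsp_def kspace_def fsc_def)

lemma zero_in_dualsp: "0 \<in> dualsp m"
  by (simp add: dualsp_def)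

lemma dualsp_sum_unit_vec:
  assumes "\<mu> \<in> dualsp m" "finite U" "U \<subseteq> {..<m}"
  shows "\<mu> (\<Sum>u\<in>U. fsc (c u) (unit_vec u)) = (\<Sum>u\<in>U. c u * \<mu> (unit_vec u))"
  using assms(2,3)
proof (induction U rule: finite_induct)
  case empty
  have "(0::nat \<Rightarrow> 'a) \<in> kspace m"
    by (simp add: kspace_def)
  then have "\<mu> (fsc 0 0) = 0 * \<mu> 0"
    using assms(1) unfolding dualsp_def by blast
  then show ?case by (simp add: fsc_def zero_fun_def)
next
  case (insert u U)
  have in_kspace: "fsc (c u) (unit_vec u) \<in> kspace m" "(\<Sum>u\<in>U. fsc (c u) (unit_vec u)) \<in> kspace m"
    using insert by (auto simp: kspace_def fsc_def unit_vec_def sum_fun_apply intro!: sum.neutral)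
  moreover have "unit_vec u \<in> kspace m"
    using insert by (simp add: unit_vec_in_kspace)
  ultimately have additive: "\<mu> (fsc (c u) (unit_vec u) + (\<Sum>u\<in>U. fsc (c u) (unit_vec u)))
      = \<mu> (fsc (c u) (unit_vec u)) + \<mu> (\<Sum>u\<in>U. fsc (c u) (unit_vec u))"
    and homogeneous: "\<mu> (fsc (c u) (unit_vec u)) = c u * \<mu> (unit_vec u)"
    using assms(1) unfolding dualsp_def by blast+
  have "\<mu> (\<Sum>u\<in>insert u U. fsc (c u) (unit_vec u))
      = \<mu> (fsc (c u) (unit_vec u) + (\<Sum>u\<in>U. fsc (c u) (unit_vec u)))"
    by (simp only: sum.insert[OF insert.hyps])
  also have "\<dots> = c u * \<mu> (unit_vec u) + (\<Sum>u\<in>U. c u * \<mu> (unit_vec u))"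
    using insert.IH insert.prems by (simp only: additive homogeneous) simp
  finally show ?case
    by (simp only: sum.insert[OF insert.hyps])
qed

lemma dual_restrict_expansion:
  fixes \<mu> :: "(nat \<Rightarrow> 'k::field) \<Rightarrow> 'k"
  assumes "\<mu> \<in> dualsp m" "finite U" "U \<subseteq> {..<m}"
  shows "dual_restrict m U \<mu> x = (\<Sum>u\<in>U. dual_restrict m U \<mu> (unit_vec u) * coord_functional m u x)"
proof (cases "x \<in> kspace m")
  case True
  have "restrict0 U x = (\<Sum>u\<in>U. fsc (x u) (unit_vec u))"
    using assms(2) by (auto simp: fun_eq_iff restrict0_def sum_fun_apply fsc_def unit_vec_def
        if_distrib cong: if_cong)
  then have "dual_restrict m U \<mu> x = (\<Sum>u\<in>U. x u * \<mu> (unit_vec u))"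
    using True dualsp_sum_unit_vec[OF assms] by (simp add: dual_restrict_def)
  also have "\<dots> = (\<Sum>u\<in>U. dual_restrict m U \<mu> (unit_vec u) * coord_functional m u x)"
  proof (rule sum.cong)
    fix u assume "u \<in> U"
    then have "restrict0 U (unit_vec u) = (unit_vec u :: nat \<Rightarrow> 'k)"
      "(unit_vec u :: nat \<Rightarrow> 'k) \<in> kspace m"
      using assms(3) by (auto simp: restrict0_def unit_vec_apply intro: unit_vec_in_kspace)
    then have "dual_restrict m U \<mu> (unit_vec u) = \<mu> (unit_vec u)"
      by (simp add: dual_restrict_def)
    then show "x u * \<mu> (unit_vec u) = dual_restrict m U \<mu> (unit_vec u) * coord_functional m u x"
      using True by (simp add: coord_functional_def)
  qed simp
  finally show ?thesis .
qed (simp add: dual_restrict_def coord_functional_def)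

lemma tdim_coord_space_times_dual:
  assumes T: "finite T" and U: "finite U" "U \<subseteq> {..<m}"
  shows "tdim (coord_space T \<times> dual_restrict m U ` dualsp m :: ((nat \<Rightarrow> 'k::field) \<times> _) set)
    = card T + card U"
proof -
  let ?b = "case_sum (\<lambda>t. (unit_vec t, 0)) (\<lambda>u. (0, coord_functional m u))
    :: nat + nat \<Rightarrow> (nat \<Rightarrow> 'k) \<times> ((nat \<Rightarrow> 'k) \<Rightarrow> 'k)"
  let ?\<phi> = "case_sum (\<lambda>t p. fst p t) (\<lambda>u p. snd p (unit_vec u))
    :: nat + nat \<Rightarrow> (nat \<Rightarrow> 'k) \<times> ((nat \<Rightarrow> 'k) \<Rightarrow> 'k) \<Rightarrow> 'k"
  have "tdim (coord_space T \<times> dual_restrict m U ` dualsp m :: ((nat \<Rightarrow> 'k) \<times> _) set)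
    = card (T <+> U)"
    unfolding tdim_def
  proof (rule tsc.dim_eq_card_dual_basis[where b = ?b and \<phi> = ?\<phi>])
    show "Vector_Spaces.linear tsc (*) (?\<phi> i)" for i
      by (cases i) (simp_all add: linear_iff vector_space_tsc vector_space_field_mult tsc_def fsc_def)
    have "unit_vec u \<in> kspace m" if "u \<in> U" for u
      using that U(2) by (auto intro: unit_vec_in_kspace)
    then show "?\<phi> j (?b i) = (if i = j then 1 else 0)" if "i \<in> T <+> U" "j \<in> T <+> U" for i j
      using that by (auto simp: unit_vec_apply coord_functional_def split: if_splits)
    have "dual_restrict m U (coord_functional m u) = coord_functional m u" if "u \<in> U" for u
      using that by (auto simp: fun_eq_iff dual_restrict_def coord_functional_def restrict0_def
          kspace_def)
    then have "coord_functional m u \<in> dual_restrict m U ` dualsp m" if "u \<in> U" for u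
      by (metis that coord_functional_in_dualsp image_eqI)
    moreover have "dual_restrict m U 0 = 0"
      by (simp add: fun_eq_iff dual_restrict_def)
    then have "0 \<in> dual_restrict m U ` dualsp m"
      by (metis image_eqI zero_in_dualsp)
    ultimately show "?b ` (T <+> U) \<subseteq> coord_space T \<times> dual_restrict m U ` dualsp m"
      by (auto simp: coord_space_def unit_vec_def)
    show "p = (\<Sum>i\<in>T <+> U. tsc (?\<phi> i p) (?b i))"
      if p_in: "p \<in> coord_space T \<times> dual_restrict m U ` dualsp m" for p
    proof -
      obtain v \<mu> where p: "p = (v, dual_restrict m U \<mu>)" and v: "v \<in> coord_space T"
        and \<mu>: "\<mu> \<in> dualsp m"
        using p_in by blast
      have "(\<Sum>i\<in>T <+> U. tsc (?\<phi> i p) (?b i))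
          = (\<Sum>t\<in>T. tsc (v t) (unit_vec t, 0))
            + (\<Sum>u\<in>U. tsc (dual_restrict m U \<mu> (unit_vec u)) (0, coord_functional m u))"
        using T U by (simp add: sum.Plus p)
      also have "\<dots> = ((\<Sum>t\<in>T. fsc (v t) (unit_vec t)),
          (\<lambda>x. \<Sum>u\<in>U. dual_restrict m U \<mu> (unit_vec u) * coord_functional m u x))"
        by (simp add: tsc_def prod_eq_iff fst_sum snd_sum fun_eq_iff sum_fun_apply fsc.scale_zero_right)
      also have "\<dots> = p"
        using coord_space_expansion[OF T v, symmetric] dual_restrict_expansion[OF \<mu> U, symmetric]
        by (simp add: p)
      finally show ?thesis ..
    qed
  qed (use T U in simp)
  then show ?thesis using T U by (simp add: card_Plus)
qed

section \<open>The radical-square-zero path algebra\<close>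

lemma fsc_in_kspace: "x \<in> kspace d \<Longrightarrow> fsc c x \<in> kspace d"
  by (simp add: kspace_def fsc_def)

text \<open>If \<open>e = f + g\<close> with orthogonal idempotents, then \<open>f = e f e\<close> and \<open>g = e g e\<close> are
  scalar multiples of \<open>e\<close>, and \<open>f g = 0\<close> forces one of the scalars to vanish.\<close>

lemma primitive_idem_if_corner_scalar:
  assumes alg: "fd_algebra d mul one" and idem: "idem d mul (e i)" and nonzero: "e i \<noteq> 0"
    and scalar: "corner d mul e i i = {fsc c (e i) | c. True}"
  shows "primitive_idem d mul (e i)"
proof -
  let ?x = "e i"
  have x: "?x \<in> kspace d" "mul ?x ?x = ?x"
    using idem by (auto simp: idem_def)
  have scalar_multiple: "\<exists>c. f = fsc c ?x"
    if f: "idem d mul f" and g: "g \<in> kspace d" and fg: "mul f g = 0" and gf: "mul g f = 0"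
      and sum: "?x = f + g" for f g
  proof -
    have fk: "f \<in> kspace d" and ff: "mul f f = f"
      using f by (auto simp: idem_def)
    have "mul ?x f = f" and "mul f ?x = f"
      using alg fk g ff fg gf unfolding sum fd_algebra_def by auto
    then have "f = mul (mul ?x f) ?x" by simp
    then have "f \<in> corner d mul e i i"
      using fk unfolding corner_def by blast
    then show ?thesis using scalar by blast
  qed
  show ?thesis
    unfolding primitive_idem_def
  proof (intro conjI notI)
    assume "\<exists>f g. idem d mul f \<and> idem d mul g \<and> f \<noteq> 0 \<and> g \<noteq> 0 \<and>
      mul f g = 0 \<and> mul g f = 0 \<and> ?x = f + g"
    then obtain f g where f: "idem d mul f" "f \<noteq> 0" and g: "idem d mul g" "g \<noteq> 0"
      and fg: "mul f g = 0" and gf: "mul g f = 0" and sum: "?x = f + g"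
      by blast
    obtain c c' where c: "f = fsc c ?x" and c': "g = fsc c' ?x"
      using scalar_multiple[OF f(1) _ fg gf sum] scalar_multiple[OF g(1) _ gf fg]
        f g sum by (metis add.commute idem_def)
    have "fsc (c * c') ?x = mul f g"
      using alg x unfolding c c' fd_algebra_def by (simp add: fsc_in_kspace fsc.scale_scale)
    then have "c = 0 \<or> c' = 0"
      using fg nonzero by (simp add: fsc.scale_eq_0_iff)
    then show False
      using f g c c' by auto
  qed (use idem nonzero in auto)
qed

definition fiber :: "nat \<Rightarrow> (nat \<Rightarrow> 'a) \<Rightarrow> 'a \<Rightarrow> nat set" where
  "fiber N g x = {t. t < N \<and> g t = x}"

lemma fiber_subset: "fiber N g x \<subseteq> {..<N}"
  by (auto simp: fiber_def)

lemma finite_fiber: "finite (fiber N g x)"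
  by (rule finite_subset[OF fiber_subset]) simp

lemma fiber_empty: "\<forall>t<N. P (g t) \<Longrightarrow> \<not> P x \<Longrightarrow> fiber N g x = {}"
  by (auto simp: fiber_def)

text \<open>Coordinate \<open>t < n\<close> of \<open>k\<^bsup>n+N\<^esup>\<close> is the idempotent of vertex \<open>t\<close>, coordinate \<open>n + t\<close>
  the arrow \<open>t\<close> from vertex \<open>fst (arr t)\<close> to vertex \<open>snd (arr t)\<close>; products of two arrows
  vanish.\<close>

definition path_mul :: "nat \<Rightarrow> nat \<Rightarrow> (nat \<Rightarrow> nat \<times> nat)
    \<Rightarrow> (nat \<Rightarrow> 'k::field) \<Rightarrow> (nat \<Rightarrow> 'k) \<Rightarrow> nat \<Rightarrow> 'k" where
  "path_mul n N arr x y = (\<lambda>t.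
     if t < n then x t * y t
     else if t < n + N then x (fst (arr (t - n))) * y t + x t * y (snd (arr (t - n)))
     else 0)"

definition path_one :: "nat \<Rightarrow> nat \<Rightarrow> 'k::field" where
  "path_one n = (\<lambda>t. if t < n then 1 else 0)"

definition path_support :: "nat \<Rightarrow> nat \<Rightarrow> (nat \<Rightarrow> nat \<times> nat) \<Rightarrow> nat \<Rightarrow> nat \<Rightarrow> nat set" where
  "path_support n N arr p q = {t. t < n \<and> t = p \<and> t = q} \<union> (+) n ` fiber N arr (p, q)"

lemma fd_algebra_path_mul:
  assumes "\<forall>t<N. fst (arr t) < n \<and> snd (arr t) < n"
  shows "fd_algebra (n + N) (path_mul n N arr) (path_one n :: nat \<Rightarrow> 'k::field)"
proof -
  let ?mul = "path_mul n N arr :: (nat \<Rightarrow> 'k) \<Rightarrow> _"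
  have ends: "fst (arr (t - n)) < n" "snd (arr (t - n)) < n" if "\<not> t < n" "t < n + N" for t
    using assms that by (simp_all add: less_diff_conv2)
  have "?mul (?mul x y) z = ?mul x (?mul y z)" for x y z
    using ends by (simp add: fun_eq_iff path_mul_def algebra_simps)
  moreover have "?mul (x + y) z = ?mul x z + ?mul y z" "?mul x (y + z) = ?mul x y + ?mul x z"
    for x y z
    by (simp_all add: fun_eq_iff path_mul_def algebra_simps)
  moreover have "?mul (fsc c x) y = fsc c (?mul x y)" "?mul x (fsc c y) = fsc c (?mul x y)" for c x y
    by (simp_all add: fun_eq_iff path_mul_def fsc_def algebra_simps)
  moreover have "?mul (path_one n) x = x" "?mul x (path_one n) = x" if "x \<in> kspace (n + N)" for x
    using that ends by (auto simp: fun_eq_iff path_mul_def path_one_def kspace_def)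
  moreover have "?mul x y \<in> kspace (n + N)" for x y
    by (simp add: kspace_def path_mul_def)
  moreover have "path_one n \<in> kspace (n + N)"
    by (simp add: kspace_def path_one_def)
  ultimately show ?thesis
    unfolding fd_algebra_def by blast
qed

lemma path_support_subset: "path_support n N arr p q \<subseteq> {..<n + N}"
  using fiber_subset by (fastforce simp: path_support_def)

lemma finite_path_support: "finite (path_support n N arr p q)"
  by (rule finite_subset[OF path_support_subset]) simp

lemma mem_path_support:
  "t \<in> path_support n N arr p q
    \<longleftrightarrow> (t < n \<and> t = p \<and> t = q) \<or> (n \<le> t \<and> t < n + N \<and> arr (t - n) = (p, q))"
proof -
  have "t \<in> (+) n ` fiber N arr (p, q) \<longleftrightarrow> n \<le> t \<and> t - n \<in> fiber N arr (p, q)"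
    by (auto intro: image_eqI[where x = "t - n"])
  then show ?thesis
    by (auto simp: path_support_def fiber_def)
qed

lemma path_mul_corner:
  assumes "p < n" "q < n"
  shows "path_mul n N arr (path_mul n N arr (unit_vec p) a) (unit_vec q)
    = restrict0 (path_support n N arr p q) (a :: nat \<Rightarrow> 'k::field)"
proof
  fix t
  consider "t < n" | "n \<le> t" "t < n + N" | "n + N \<le> t" by linarith
  then show "path_mul n N arr (path_mul n N arr (unit_vec p) a) (unit_vec q) t
      = restrict0 (path_support n N arr p q) a t"
  proof cases
    case 1
    then show ?thesis by (simp add: path_mul_def unit_vec_apply restrict0_def mem_path_support)
  next
    case 2
    then show ?thesis
      using assms by (simp add: path_mul_def unit_vec_apply restrict0_def mem_path_support prod_eq_iff)
  next
    case 3
    then show ?thesis by (simp add: path_mul_def restrict0_def mem_path_support)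
  qed
qed

text \<open>The idempotents \<open>e\<^sub>i\<close> are numbered from 1, the vertices from 0.\<close>

definition vertex_idem :: "nat \<Rightarrow> nat \<Rightarrow> 'k::field" where
  "vertex_idem i = unit_vec (i - 1)"

lemma corner_path_mul:
  assumes "i \<in> {1..n}" "j \<in> {1..n}"
  shows "corner (n + N) (path_mul n N arr) vertex_idem i j
    = (coord_space (path_support n N arr (i - 1) (j - 1)) :: (nat \<Rightarrow> 'k::field) set)"
proof -
  have "corner (n + N) (path_mul n N arr) vertex_idem i j
      = (\<lambda>a. path_mul n N arr (path_mul n N arr (vertex_idem i) a) (vertex_idem j))
          ` kspace (n + N)"
    by (simp add: corner_def Setcompr_eq_image)
  also have "\<dots> = restrict0 (path_support n N arr (i - 1) (j - 1)) ` kspace (n + N)"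
    using assms by (intro image_cong refl) (auto simp: vertex_idem_def path_mul_corner)
  also have "\<dots> = coord_space (path_support n N arr (i - 1) (j - 1))"
    by (rule restrict0_image_kspace[OF path_support_subset])
  finally show ?thesis .
qed

lemma card_path_support:
  assumes "p < n"
  shows "card (path_support n N arr p q) = of_bool (p = q) + card (fiber N arr (p, q))"
proof -
  have "card (path_support n N arr p q)
      = card {t. t < n \<and> t = p \<and> t = q} + card ((+) n ` fiber N arr (p, q))"
    unfolding path_support_def
    by (rule card_Un_disjoint) (auto simp: fiber_def finite_fiber)
  moreover have "{t. t < n \<and> t = p \<and> t = q} = (if p = q then {p} else {})"
    using assms by auto
  ultimately show ?thesis
    by (simp add: card_image)
qed

lemma path_support_lower:
  assumes "\<forall>t<N. fst (arr t) < snd (arr t)" "q \<le> p"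
  shows "path_support n N arr p q = (if p = q \<and> p < n then {p} else {})"
proof -
  have "fiber N arr (p, q) = {}"
    using assms by (intro fiber_empty[where P = "\<lambda>(p, q). p < q"]) auto
  then show ?thesis by (auto simp: path_support_def)
qed

lemma corner_path_mul_diag:
  assumes "\<forall>t<N. fst (arr t) < snd (arr t)" "i \<in> {1..n}"
  shows "corner (n + N) (path_mul n N arr) vertex_idem i i
    = ({fsc c (vertex_idem i) | c. True} :: (nat \<Rightarrow> 'k::field) set)"
proof -
  have support: "path_support n N arr (i - 1) (i - 1) = {i - 1}"
    using assms by (auto simp: path_support_lower)
  show ?thesis
    unfolding corner_path_mul[OF assms(2) assms(2)] support vertex_idem_def
    by (rule coord_space_singleton)
qed

lemma complete_prim_orth_path_mul:
  assumes "\<forall>t<N. fst (arr t) < snd (arr t) \<and> snd (arr t) < n"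
  shows "complete_prim_orth (n + N) (path_mul n N arr) (path_one n :: nat \<Rightarrow> 'k::field) n
    vertex_idem"
  unfolding complete_prim_orth_def
proof (intro conjI ballI impI)
  fix i assume i: "i \<in> {1..n}"
  have alg: "fd_algebra (n + N) (path_mul n N arr) (path_one n :: nat \<Rightarrow> 'k)"
    using assms by (intro fd_algebra_path_mul) auto
  have idem: "idem (n + N) (path_mul n N arr) (vertex_idem i :: nat \<Rightarrow> 'k)"
    using i by (auto simp: idem_def vertex_idem_def unit_vec_in_kspace path_mul_def unit_vec_apply
        fun_eq_iff)
  have nonzero: "vertex_idem i \<noteq> (0 :: nat \<Rightarrow> 'k)"
    by (simp add: vertex_idem_def unit_vec_nonzero)
  have scalar: "corner (n + N) (path_mul n N arr) vertex_idem i i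
      = ({fsc c (vertex_idem i) | c. True} :: (nat \<Rightarrow> 'k) set)"
    using assms i by (intro corner_path_mul_diag) auto
  show "primitive_idem (n + N) (path_mul n N arr) (vertex_idem i :: nat \<Rightarrow> 'k)"
    using primitive_idem_if_corner_scalar[OF alg _ nonzero scalar] idem by simp
next
  fix i j assume "i \<in> {1..n}" "j \<in> {1..n}" "i \<noteq> j"
  then show "path_mul n N arr (vertex_idem i) (vertex_idem j) = (0 :: nat \<Rightarrow> 'k)"
    by (auto simp: path_mul_def vertex_idem_def unit_vec_apply fun_eq_iff)
next
  have "(\<Sum>i=1..n. vertex_idem i t) = (path_one n t :: 'k)" for t
  proof -
    have "(\<Sum>i=1..n. vertex_idem i t) = (\<Sum>i\<in>{1..n}. if i = t + 1 then 1 else (0 :: 'k))"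
      by (rule sum.cong) (auto simp: vertex_idem_def unit_vec_apply)
    then show ?thesis by (simp add: path_one_def)
  qed
  then show "(\<Sum>i=1..n. vertex_idem i) = (path_one n :: nat \<Rightarrow> 'k)"
    by (simp add: fun_eq_iff sum_fun_apply)
qed

lemma triangular_alg_path_mul:
  assumes "\<forall>t<N. fst (arr t) < snd (arr t)"
  shows "triangular_alg (n + N) (path_mul n N arr :: (nat \<Rightarrow> 'k::field) \<Rightarrow> _) n
    vertex_idem"
  unfolding triangular_alg_def
proof (intro conjI ballI impI)
  fix i j assume ij: "i \<in> {1..n}" "j \<in> {1..n}" "j < i"
  then have "path_support n N arr (i - 1) (j - 1) = {}"
    using assms by (auto simp: path_support_lower)
  then show "corner (n + N) (path_mul n N arr) vertex_idem i j = {0}"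
    unfolding corner_path_mul[OF ij(1,2)] by (simp add: coord_space_empty)
qed (use assms corner_path_mul_diag in blast)

section \<open>The bimodule and the trivial extension\<close>

text \<open>\<open>M = k\<^sup>m\<close>, where basis vector \<open>u\<close> spans a copy of \<open>k\<close> in the corner at the vertex
  pair \<open>gen u\<close>, and arrows act as zero.\<close>

definition vertex_lact :: "nat \<Rightarrow> (nat \<Rightarrow> nat \<times> nat)
    \<Rightarrow> (nat \<Rightarrow> 'k::field) \<Rightarrow> (nat \<Rightarrow> 'k) \<Rightarrow> nat \<Rightarrow> 'k" where
  "vertex_lact m gen a x = (\<lambda>u. if u < m then a (fst (gen u)) * x u else 0)"

definition vertex_ract :: "nat \<Rightarrow> (nat \<Rightarrow> nat \<times> nat)
    \<Rightarrow> (nat \<Rightarrow> 'k::field) \<Rightarrow> (nat \<Rightarrow> 'k) \<Rightarrow> nat \<Rightarrow> 'k" where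
  "vertex_ract m gen x a = (\<lambda>u. if u < m then x u * a (snd (gen u)) else 0)"

lemma fd_bimodule_vertex_action:
  assumes "\<forall>u<m. fst (gen u) < n \<and> snd (gen u) < n"
  shows "fd_bimodule (n + N) (path_mul n N arr) (path_one n :: nat \<Rightarrow> 'k::field) m
    (vertex_lact m gen) (vertex_ract m gen)"
  using assms
  unfolding fd_bimodule_def kspace_def path_mul_def path_one_def fsc_def vertex_lact_def
    vertex_ract_def
  by (auto simp: fun_eq_iff algebra_simps)

lemma vertex_action_corner:
  "vertex_lact m gen (unit_vec p) (vertex_ract m gen x (unit_vec q))
    = restrict0 (fiber m gen (p, q)) x"
  "vertex_ract m gen (vertex_lact m gen (unit_vec p) x) (unit_vec q)
    = restrict0 (fiber m gen (p, q)) x"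
  by (auto simp: fun_eq_iff vertex_lact_def vertex_ract_def unit_vec_apply restrict0_def fiber_def)

lemma mcorner_vertex_action:
  "mcorner m (vertex_lact m gen) (vertex_ract m gen) vertex_idem i j
    = (coord_space (fiber m gen (i - 1, j - 1)) :: (nat \<Rightarrow> 'k::field) set)"
  unfolding mcorner_def vertex_idem_def vertex_action_corner Setcompr_eq_image
  by (rule restrict0_image_kspace[OF fiber_subset])

lemma triangular_bimod_vertex_action:
  assumes "\<forall>u<m. fst (gen u) \<le> snd (gen u)"
  shows "triangular_bimod m (vertex_lact m gen :: (nat \<Rightarrow> 'k::field) \<Rightarrow> _) (vertex_ract m gen) n
    vertex_idem"
  unfolding triangular_bimod_def
proof (intro ballI impI)
  fix i j assume "i \<in> {1..n}" "j \<in> {1..n}" "j < i"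
  then have "fiber m gen (i - 1, j - 1) = {}"
    using assms by (intro fiber_empty[where P = "\<lambda>(p, q). p \<le> q"]) auto
  then show "mcorner m (vertex_lact m gen) (vertex_ract m gen) vertex_idem i j
      = {0 :: nat \<Rightarrow> 'k}"
    unfolding mcorner_vertex_action by (simp only: coord_space_empty)
qed

lemma triv_mul_corner:
  assumes "\<forall>x\<in>kspace m. lact e' x \<in> kspace m"
  shows "triv_mul mul m lact ract (triv_mul mul m lact ract (e, 0) (a, \<mu>)) (e', 0)
    = (mul (mul e a) e', \<lambda>x. if x \<in> kspace m then \<mu> (ract (lact e' x) e) else 0)"
  using assms by (simp add: triv_mul_def dleft_def dright_def fun_eq_iff)

lemma tcorner_vertex_action:
  assumes "i \<in> {1..n}" "j \<in> {1..n}"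
  shows "tcorner (n + N) (path_mul n N arr) m (vertex_lact m gen) (vertex_ract m gen)
      vertex_idem i j
    = coord_space (path_support n N arr (i - 1) (j - 1))
      \<times> (dual_restrict m (fiber m gen (j - 1, i - 1)) ` dualsp m :: ((nat \<Rightarrow> 'k::field) \<Rightarrow> 'k) set)"
proof -
  let ?S = "path_support n N arr (i - 1) (j - 1)" and ?U = "fiber m gen (j - 1, i - 1)"
  let ?mul = "path_mul n N arr :: (nat \<Rightarrow> 'k) \<Rightarrow> _"
    and ?lact = "vertex_lact m gen :: (nat \<Rightarrow> 'k) \<Rightarrow> _" and ?ract = "vertex_ract m gen"
  have lact_kspace: "\<forall>x\<in>kspace m. ?lact e x \<in> kspace m" for e
    by (simp add: kspace_def vertex_lact_def)
  have "tcorner (n + N) ?mul m ?lact ?ract vertex_idem i j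
      = (\<lambda>z. triv_mul ?mul m ?lact ?ract (triv_mul ?mul m ?lact ?ract (vertex_idem i, 0) z)
          (vertex_idem j, 0)) ` (kspace (n + N) \<times> dualsp m)"
    unfolding tcorner_def Setcompr_eq_image by (rule refl)
  also have "\<dots> = map_prod (restrict0 ?S) (dual_restrict m ?U) ` (kspace (n + N) \<times> dualsp m)"
  proof (intro image_cong refl)
    fix z :: "(nat \<Rightarrow> 'k) \<times> ((nat \<Rightarrow> 'k) \<Rightarrow> 'k)"
    obtain a \<mu> where z: "z = (a, \<mu>)" by fastforce
    have i: "i - 1 < n" and j: "j - 1 < n" using assms by auto
    show "triv_mul ?mul m ?lact ?ract (triv_mul ?mul m ?lact ?ract (vertex_idem i, 0) z)
        (vertex_idem j, 0) = map_prod (restrict0 ?S) (dual_restrict m ?U) z"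
      unfolding z triv_mul_corner[OF lact_kspace] vertex_idem_def path_mul_corner[OF i j]
        vertex_action_corner
      by (simp only: map_prod_simp dual_restrict_def)
  qed
  also have "\<dots> = coord_space ?S \<times> dual_restrict m ?U ` dualsp m"
    by (rule map_prod_surj_on[OF restrict0_image_kspace[OF path_support_subset] refl])
  finally show ?thesis .
qed

lemma reversed_index:
  assumes "i \<in> {1..n}"
  shows "n + 1 - i \<in> {1..n}" "n + 1 - i - 1 = (n - i :: nat)"
  using assms by auto

lemma cartanA_path_mul:
  assumes "i \<in> {1..n}" "j \<in> {1..n}"
  shows "cartanA (n + N) (path_mul n N arr :: (nat \<Rightarrow> 'k::field) \<Rightarrow> _) n vertex_idem i j
    = of_bool (i = j) + int (card (fiber N arr (n - j, n - i)))"
proof -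
  have "cartanA (n + N) (path_mul n N arr :: (nat \<Rightarrow> 'k) \<Rightarrow> _) n vertex_idem i j
      = int (card (path_support n N arr (n - j) (n - i)))"
    unfolding cartanA_def corner_path_mul[OF reversed_index(1)[OF assms(2)]
        reversed_index(1)[OF assms(1)]] reversed_index(2)[OF assms(1)] reversed_index(2)[OF assms(2)]
    by (simp add: kdim_coord_space finite_path_support)
  also have "\<dots> = of_bool (i = j) + int (card (fiber N arr (n - j, n - i)))"
    using assms by (auto simp: card_path_support)
  finally show ?thesis .
qed

lemma cartanM_vertex_action:
  assumes "i \<in> {1..n}" "j \<in> {1..n}"
  shows "cartanM m (vertex_lact m gen :: (nat \<Rightarrow> 'k::field) \<Rightarrow> _) (vertex_ract m gen) n
      vertex_idem i j
    = int (card (fiber m gen (n - j, n - i)))"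
  unfolding cartanM_def mcorner_vertex_action reversed_index(2)[OF assms(1)]
    reversed_index(2)[OF assms(2)]
  by (simp add: kdim_coord_space finite_fiber)

lemma cartanL_trivial_extension:
  assumes "i \<in> {1..n}" "j \<in> {1..n}"
  shows "cartanL (n + N) (path_mul n N arr :: (nat \<Rightarrow> 'k::field) \<Rightarrow> _) m (vertex_lact m gen)
      (vertex_ract m gen) n vertex_idem i j
    = of_bool (i = j) + int (card (fiber N arr (n - j, n - i)))
      + int (card (fiber m gen (n - i, n - j)))"
proof -
  have "cartanL (n + N) (path_mul n N arr :: (nat \<Rightarrow> 'k) \<Rightarrow> _) m (vertex_lact m gen)
      (vertex_ract m gen) n vertex_idem i j
      = int (card (path_support n N arr (n - j) (n - i)) + card (fiber m gen (n - i, n - j)))"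
    unfolding cartanL_def tcorner_vertex_action[OF reversed_index(1)[OF assms(2)]
        reversed_index(1)[OF assms(1)]] reversed_index(2)[OF assms(1)] reversed_index(2)[OF assms(2)]
    by (simp add: tdim_coord_space_times_dual finite_path_support finite_fiber fiber_subset)
  also have "\<dots> = of_bool (i = j) + int (card (fiber N arr (n - j, n - i)))
      + int (card (fiber m gen (n - i, n - j)))"
    using assms by (auto simp: card_path_support)
  finally show ?thesis .
qed

section \<open>Realising the matrix\<close>

lemma Bplus_add_Bminus_transpose: "Bplus B i j + Bminus B j i = B i j"
  by (simp add: Bplus_def Bminus_def)

lemma ex_fiber_cards:
  assumes "finite {x. f x \<noteq> 0}"
  shows "\<exists>N g. (\<forall>t<N. f (g t) \<noteq> 0) \<and> (\<forall>x. card (fiber N g x) = f x)"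
proof -
  obtain xs where xs: "mset xs = Abs_multiset f"
    using ex_mset by blast
  have count: "count (mset xs) = f"
    using assms by (simp add: xs count_Abs_multiset)
  have "card (fiber (length xs) ((!) xs) x) = f x" for x
  proof -
    have "card (fiber (length xs) ((!) xs) x) = length (filter ((=) x) xs)"
      by (simp add: fiber_def length_filter_conv_card eq_commute)
    also have "\<dots> = count (mset xs) x"
      by (simp add: count_mset count_list_eq_length_filter)
    finally show ?thesis by (simp add: count)
  qed
  moreover have "f (xs ! t) \<noteq> 0" if "t < length xs" for t
    using count_mset_0_iff[of xs "xs ! t"] nth_mem[OF that] by (simp add: count)
  ultimately show ?thesis by blast
qed

lemma ex_arrows_and_generators:
  assumes "\<forall>i\<in>{1..n}. \<forall>j\<in>{1..n}. B i j \<ge> 0" and "\<forall>i\<in>{1..n}. B i i > 0"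
  obtains N arr m gen
  where "\<forall>t<N. fst (arr t) < snd (arr t) \<and> snd (arr t) < n"
    and "\<forall>u<m. fst (gen u) \<le> snd (gen u) \<and> snd (gen u) < n"
    and "\<And>i j. i \<in> {1..n} \<Longrightarrow> j \<in> {1..n} \<Longrightarrow>
      of_bool (i = j) + int (card (fiber N arr (n - j, n - i))) = Bplus B i j"
    and "\<And>i j. i \<in> {1..n} \<Longrightarrow> j \<in> {1..n} \<Longrightarrow>
      int (card (fiber m gen (n - j, n - i))) = Bminus B i j"
proof -
  \<comment> \<open>vertex \<open>p\<close> carries \<open>e\<^bsub>p+1\<^esub>\<close>, whose Cartan index is \<open>n - p\<close>\<close>
  define fA where "fA = (\<lambda>(p, q). if p < q \<and> q < n then nat (B (n - q) (n - p)) else 0)"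
  define fM where "fM = (\<lambda>(p, q). if p \<le> q \<and> q < n then nat (Bminus B (n - q) (n - p)) else 0)"
  have "finite {x. fA x \<noteq> 0}" "finite {x. fM x \<noteq> 0}"
    by (rule finite_subset[of _ "{..<n} \<times> {..<n}"], auto simp: fA_def fM_def split: if_splits)+
  then obtain N arr m gen
    where arr: "\<forall>t<N. fA (arr t) \<noteq> 0" "\<forall>x. card (fiber N arr x) = fA x"
      and gen: "\<forall>u<m. fM (gen u) \<noteq> 0" "\<forall>x. card (fiber m gen x) = fM x"
    using ex_fiber_cards by metis
  have arrow_ends: "fst x < snd x \<and> snd x < n" if "fA x \<noteq> 0" for x
    using that by (cases x) (simp add: fA_def split: if_splits)
  have generator_ends: "fst x \<le> snd x \<and> snd x < n" if "fM x \<noteq> 0" for x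
    using that by (cases x) (simp add: fM_def split: if_splits)
  have counts: "of_bool (i = j) + int (fA (n - j, n - i)) = Bplus B i j"
    "int (fM (n - j, n - i)) = Bminus B i j"
    if "i \<in> {1..n}" "j \<in> {1..n}" for i j
    using that assms by (auto simp: fA_def fM_def Bplus_def Bminus_def)
  show ?thesis
  proof (rule that)
    show "\<forall>t<N. fst (arr t) < snd (arr t) \<and> snd (arr t) < n"
      using arr(1) arrow_ends by blast
    show "\<forall>u<m. fst (gen u) \<le> snd (gen u) \<and> snd (gen u) < n"
      using gen(1) generator_ends by blast
  qed (simp_all add: arr(2) gen(2) counts)
qed

theorem corollary2p22:
  fixes B :: "nat \<Rightarrow> nat \<Rightarrow> int" and n :: nat
  assumes "\<forall>i\<in>{1..n}. \<forall>j\<in>{1..n}. B i j \<ge> 0"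
    and "\<forall>i\<in>{1..n}. B i i > 0"
  shows "\<exists>(d::nat) (mul :: (nat \<Rightarrow> 'k::field) \<Rightarrow> (nat \<Rightarrow> 'k) \<Rightarrow> (nat \<Rightarrow> 'k)) one e
           (m::nat) lact ract.
     fd_algebra d mul one \<and> complete_prim_orth d mul one n e \<and> triangular_alg d mul n e \<and>
     fd_bimodule d mul one m lact ract \<and> triangular_bimod m lact ract n e \<and>
     (\<forall>i\<in>{1..n}. \<forall>j\<in>{1..n}. cartanA d mul n e i j = Bplus B i j) \<and>
     (\<forall>i\<in>{1..n}. \<forall>j\<in>{1..n}. cartanM m lact ract n e i j = Bminus B i j) \<and>
     (\<forall>i\<in>{1..n}. \<forall>j\<in>{1..n}. cartanL d mul m lact ract n e i j = B i j)"
proof -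
  obtain N arr m gen
    where arrows: "\<forall>t<N. fst (arr t) < snd (arr t) \<and> snd (arr t) < n"
      and generators: "\<forall>u<m. fst (gen u) \<le> snd (gen u) \<and> snd (gen u) < n"
      and entries: "\<And>i j. i \<in> {1..n} \<Longrightarrow> j \<in> {1..n} \<Longrightarrow>
          of_bool (i = j) + int (card (fiber N arr (n - j, n - i))) = Bplus B i j"
        "\<And>i j. i \<in> {1..n} \<Longrightarrow> j \<in> {1..n} \<Longrightarrow>
          int (card (fiber m gen (n - j, n - i))) = Bminus B i j"
    using ex_arrows_and_generators[OF assms] by blast
  show ?thesis
  proof (intro exI conjI)
    show "fd_algebra (n + N) (path_mul n N arr) (path_one n :: nat \<Rightarrow> 'k)"
      using arrows by (intro fd_algebra_path_mul) auto
    show "complete_prim_orth (n + N) (path_mul n N arr) (path_one n :: nat \<Rightarrow> 'k) n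
        vertex_idem"
      using arrows by (rule complete_prim_orth_path_mul)
    show "fd_bimodule (n + N) (path_mul n N arr) (path_one n :: nat \<Rightarrow> 'k) m
        (vertex_lact m gen) (vertex_ract m gen)"
      using generators by (intro fd_bimodule_vertex_action) auto
  qed (use arrows generators in \<open>auto simp: cartanA_path_mul cartanM_vertex_action
      cartanL_trivial_extension entries Bplus_add_Bminus_transpose intro: triangular_alg_path_mul
      triangular_bimod_vertex_action\<close>)
qed

end
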